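(* Let $\hat a=\infty$, $D=1$, $\mu(a,x)\equiv\mu$ for a constant $\mu>0$, and $\beta(a,x)\equiv\beta(x)$ with $\beta\in C(\overline\Omega)$ nonnegative; let $\beta_{\max}=\max_{x\in\overline\Omega}\beta(x)$. Suppose $J(x-y)=\rho$ for all $x,y\in\Omega$, for a constant $\rho>0$. If $$\rho\int_\Omega\frac{dx}{\beta_{\max}-\beta(x)}<1,$$ then $\mathcal A$ admits no eigenvalue with a positive eigenfunction in $\mathrm{dom}(\mathcal A)$; in particular $\mathcal A$ admits no principal eigenvalue.
   Context: Here $\Omega\subset\mathbb R^N$ is a bounded domain, $J\in C(\mathbb R^N)$ is nonnegative, compactly supported, $J(0)>0$, $\int J=1$, and $K\varphi=\int_\Omega J(\cdot-y)\varphi(y)dy$ on $X$ ($X=C(\overline\Omega)$ or $L^1(\Omega)$). $\mathcal A$ is the linear operator on $X\times L^1((0,\infty),X)$ associated with the problem $\partial_a\phi=D(K\phi-\phi)-\mu\phi$, $\phi(0)=\int_0^\infty\beta(a,\cdot)\phi(a)da$; i.e. $(0,\phi)\in\mathrm{dom}(\mathcal A)$ is an eigenvector for eigenvalue $\lambda$ iff $\phi\in W^{1,1}((0,\infty),X)$, $\partial_a\phi=K\phi-\phi-\mu\phi-\lambda\phi$ on $(0,\infty)$ and $\phi(0)=\int_0^\infty\beta\phi\,da$ (here $D=1$). A positive eigenfunction means $\phi\ge0$, $\phi\ne0$. A principal eigenvalue is a real eigenvalue with positive eigenvector larger than the real part of every other eigenvalue. *)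

theory Defs
  imports "HOL-Analysis.Analysis"
begin

text \<open>State space X = C(closure Omega), elements represented as functions
  'a => real of which only the values on closure Omega matter; sup norm.\<close>

definition Xnorm :: "'a::euclidean_space set \<Rightarrow> ('a \<Rightarrow> real) \<Rightarrow> real" where
  "Xnorm \<Omega> f = (SUP x\<in>closure \<Omega>. \<bar>f x\<bar>)"

definition in_X :: "'a::euclidean_space set \<Rightarrow> ('a \<Rightarrow> real) \<Rightarrow> bool" where
  "in_X \<Omega> f \<longleftrightarrow> continuous_on (closure \<Omega>) f"

definition Kop :: "('a::euclidean_space \<Rightarrow> real) \<Rightarrow> 'a set \<Rightarrow> ('a \<Rightarrow> real) \<Rightarrow> ('a \<Rightarrow> real)" where
  "Kop J \<Omega> f = (\<lambda>x. integral \<Omega> (\<lambda>y. J (x - y) * f y))"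

text \<open>phi : [0,inf) -> X has derivative psi (an element of X) at a, in the X-norm
  (one-sided at a = 0).\<close>

definition has_X_derivative ::
  "'a::euclidean_space set \<Rightarrow> (real \<Rightarrow> 'a \<Rightarrow> real) \<Rightarrow> ('a \<Rightarrow> real) \<Rightarrow> real \<Rightarrow> bool" where
  "has_X_derivative \<Omega> \<phi> \<psi> a \<longleftrightarrow>
     ((\<lambda>h. Xnorm \<Omega> (\<lambda>x. (\<phi> (a + h) x - \<phi> a x) / h - \<psi> x)) \<longlongrightarrow> 0) (at 0 within {-a..})"

text \<open>phi in W^{1,1}((0,inf), X) (continuous representative on [0,inf), with
  X-valued derivative psi; phi and psi integrable in X-norm).\<close>

definition W11 :: "'a::euclidean_space set \<Rightarrow> (real \<Rightarrow> 'a \<Rightarrow> real) \<Rightarrow> bool" where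
  "W11 \<Omega> \<phi> \<longleftrightarrow> (\<exists>\<psi>.
     (\<forall>a\<ge>0. in_X \<Omega> (\<phi> a)) \<and> (\<forall>a>0. in_X \<Omega> (\<psi> a)) \<and>
     ((\<lambda>h. Xnorm \<Omega> (\<lambda>x. \<phi> h x - \<phi> 0 x)) \<longlongrightarrow> 0) (at_right 0) \<and>
     (\<forall>a>0. has_X_derivative \<Omega> \<phi> (\<psi> a) a) \<and>
     (\<lambda>a. Xnorm \<Omega> (\<phi> a)) integrable_on {0..} \<and>
     (\<lambda>a. Xnorm \<Omega> (\<psi> a)) integrable_on {0<..})"

text \<open>(0, phi) in dom(A) is an eigenvector of A for the eigenvalue lam
  (D = 1, mu(a,x) = mu constant, beta(a,x) = beta(x)).\<close>

definition is_eigenvector ::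
  "('a::euclidean_space \<Rightarrow> real) \<Rightarrow> 'a set \<Rightarrow> real \<Rightarrow> ('a \<Rightarrow> real) \<Rightarrow> real
    \<Rightarrow> (real \<Rightarrow> 'a \<Rightarrow> real) \<Rightarrow> bool" where
  "is_eigenvector J \<Omega> \<mu> \<beta> lam \<phi> \<longleftrightarrow>
     W11 \<Omega> \<phi> \<and>
     (\<forall>a>0. has_X_derivative \<Omega> \<phi>
              (\<lambda>x. Kop J \<Omega> (\<phi> a) x - \<phi> a x - \<mu> * \<phi> a x - lam * \<phi> a x) a) \<and>
     (\<forall>x\<in>closure \<Omega>. \<phi> 0 x = \<beta> x * integral {0..} (\<lambda>a. \<phi> a x))"

definition positive_fun :: "'a::euclidean_space set \<Rightarrow> (real \<Rightarrow> 'a \<Rightarrow> real) \<Rightarrow> bool" where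
  "positive_fun \<Omega> \<phi> \<longleftrightarrow>
     (\<forall>a\<ge>0. \<forall>x\<in>closure \<Omega>. \<phi> a x \<ge> 0) \<and> (\<exists>a\<ge>0. \<exists>x\<in>closure \<Omega>. \<phi> a x \<noteq> 0)"

end

theory Submission
  imports Defs
begin

(* Since J equals rho on Omega - Omega, K phi(a) is the constant rho * M(a), M(a) = int_Omega phi(a),
   so for every x the profile a -> phi(a,x) solves u' = rho M(a) - c u with c = 1 + mu + lambda.
   Differences of two profiles therefore decay like e^(-c a), and M itself solves
   M' = (k - c) M with k = rho |Omega|.  This makes phi explicit:
   phi(a,x) = B e^((k-c) a) + (phi(0,x) - B) e^(-c a), B the mean of phi(0).
   Positivity gives B > 0 and integrability in a then forces k < c.  The renewal condition
   phi(0) = beta int_0^oo phi da now reads (c - beta(x)) Phi(x) = B k / (c - k) > 0 with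
   Phi(x) = int_0^oo phi(a,x) da, so beta < c on the closure of Omega and
   rho int_Omega dx / (c - beta) = 1, which is impossible when c > beta_max and
   rho int_Omega dx / (beta_max - beta) < 1. *)

lemma continuous_on_closure_integrable_on:
  fixes f :: "'a::euclidean_space \<Rightarrow> real"
  assumes "bounded S" "S \<in> sets lebesgue" "continuous_on (closure S) f"
  shows "f integrable_on S"
proof -
  have "compact (f ` closure S)"
    using assms(1,3) by (intro compact_continuous_image) (simp_all add: compact_closure)
  then obtain B where B: "\<And>x. x \<in> closure S \<Longrightarrow> \<bar>f x\<bar> \<le> B"
    by (metis compact_imp_bounded bounded_iff image_eqI real_norm_def)
  have S: "S \<in> lmeasurable"
    using assms(1,2) by (rule bounded_set_imp_lmeasurable)
  show ?thesis
  proof (rule measurable_bounded_by_integrable_imp_integrable_real[where g="\<lambda>_. B"])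
    show "f \<in> borel_measurable (lebesgue_on S)"
      using continuous_on_subset[OF assms(3) closure_subset]
      by (rule continuous_imp_measurable_on_sets_lebesgue) (rule assms(2))
    show "(\<lambda>_. B) integrable_on S"
      using S by (rule integrable_on_const)
    show "\<bar>f x\<bar> \<le> B" if "x \<in> S" for x
      using B closure_subset that by blast
  qed (rule assms(2))
qed

lemma integral_const_lmeasurable:
  assumes "S \<in> lmeasurable"
  shows "integral S (\<lambda>_. c) = measure lebesgue S * (c::real)"
  using lmeasure_integral[OF assms] integral_mult_left[of S "\<lambda>_. 1" c] by simp

lemma measure_lebesgue_open_pos:
  fixes S :: "'a::euclidean_space set"
  assumes "open S" "bounded S" "S \<noteq> {}"
  shows "measure lebesgue S > 0"
proof -
  obtain y r where r: "r > 0" "ball y r \<subseteq> S"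
    using assms(1,3) openE by (metis ex_in_conv)
  have "measure lebesgue (ball y r) > 0"
    using content_ball_pos[OF r(1)] by (simp add: measure_completion)
  also have "measure lebesgue (ball y r) \<le> measure lebesgue S"
    using r(2) lmeasurable_open[OF assms(2,1)] by (intro measure_mono_fmeasurable) auto
  finally show ?thesis .
qed

lemma integral_pos_continuous_on_closure:
  fixes f :: "'a::euclidean_space \<Rightarrow> real"
  assumes "open S" "bounded S" "continuous_on (closure S) f" "\<And>x. x \<in> S \<Longrightarrow> f x \<ge> 0"
    and "x0 \<in> closure S" "f x0 > 0"
  shows "integral S f > 0"
proof -
  obtain y where y: "y \<in> S" "f y > 0"
    using continuous_le_on_closure[OF assms(3,5), of 0] assms(6) by force
  have "y \<in> interior (closure S)"
    using interior_maximal[OF closure_subset assms(1)] y(1) by blast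
  then have "isCont f y"
    using assms(3) continuous_on_interior by blast
  then obtain r where r: "r > 0" "\<And>z. dist z y < r \<Longrightarrow> dist (f z) (f y) < f y / 2"
    using y(2) unfolding continuous_at_eps_delta by (metis half_gt_zero)
  obtain r' where r': "r' > 0" "ball y r' \<subseteq> S"
    using assms(1) y(1) openE by blast
  define s where "s = min r r'"
  have s: "s > 0" "s \<le> r" "ball y s \<subseteq> S"
    using r(1) r' unfolding s_def by auto
  have f_ge: "f y / 2 \<le> f z" if "z \<in> ball y s" for z
  proof -
    have "\<bar>f y - f z\<bar> < f y / 2"
      using r(2)[of z] that s(2) by (simp add: dist_commute dist_real_def)
    then show ?thesis by linarith
  qed
  have f_int_ball: "f integrable_on ball y s"
    using continuous_on_subset[OF assms(3) closure_mono[OF s(3)]]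
    by (intro continuous_on_closure_integrable_on) auto
  have "0 < measure lebesgue (ball y s) * (f y / 2)"
    using measure_lebesgue_open_pos[of "ball y s"] s(1) y(2) by simp
  also have "\<dots> = integral (ball y s) (\<lambda>_. f y / 2)"
    by (simp add: integral_const_lmeasurable)
  also have "\<dots> \<le> integral (ball y s) f"
    using f_int_ball f_ge integrable_on_const[OF lmeasurable_ball] by (intro integral_le) auto
  also have "\<dots> \<le> integral S f"
  proof (rule integral_subset_le)
    show "f integrable_on S"
      using assms(2,3) lmeasurable_open[OF assms(2,1)] by (intro continuous_on_closure_integrable_on) auto
  qed (use s(3) f_int_ball assms(4) in auto)
  finally show ?thesis .
qed

lemma integrable_on_nonneg_exists_lt:
  fixes F :: "real \<Rightarrow> real"
  assumes "F integrable_on {0..}" "\<And>a. a \<ge> 0 \<Longrightarrow> F a \<ge> 0" "e > 0"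
  shows "\<exists>a\<ge>T. F a < e"
proof (rule ccontr)
  assume "\<not> ?thesis"
  then have F_ge: "e \<le> F a" if "a \<ge> T" for a
    using that by (meson not_le)
  define T' where "T' = max T 0"
  define n where "n = integral {0..} F / e + 1"
  have "0 \<le> integral {0..} F"
    using assms(1,2) by (intro integral_nonneg) auto
  then have n: "n \<ge> 0" "integral {0..} F < n * e"
    using assms(3) by (simp_all add: n_def field_simps)
  have sub: "{T'..T'+n} \<subseteq> {0..}"
    by (auto simp: T'_def)
  have F_int: "F integrable_on {T'..T'+n}"
    using integrable_on_subinterval[OF assms(1) sub] .
  have "n * e = integral {T'..T'+n} (\<lambda>_. e)"
    using n(1) by simp
  also have "\<dots> \<le> integral {T'..T'+n} F"
    using F_int F_ge by (intro integral_le) (auto simp: T'_def)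
  also have "\<dots> \<le> integral {0..} F"
    using sub F_int assms(1,2) by (intro integral_subset_le) auto
  finally show False
    using n(2) by linarith
qed

lemma linear_ode_solution:
  fixes w :: "real \<Rightarrow> real"
  assumes "(w \<longlongrightarrow> w 0) (at_right 0)"
    and "\<And>s. s > 0 \<Longrightarrow> (w has_real_derivative a * w s) (at s)"
    and "t \<ge> 0"
  shows "w t = exp (a * t) * w 0"
proof -
  define v where "v s = exp (-a * s) * w s" for s
  have v_deriv: "(v has_real_derivative 0) (at s)" if "s > 0" for s
  proof -
    have "(v has_real_derivative exp (-a * s) * (-a) * w s + exp (-a * s) * (a * w s)) (at s)"
      unfolding v_def using assms(2)[OF that] by (auto intro!: derivative_eq_intros)
    then show ?thesis by (simp add: algebra_simps)
  qed
  have "v t = v 0"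
  proof (cases "t = 0")
    case False
    then have t: "0 < t" using assms(3) by simp
    have "continuous_on {0..t} v"
    proof (rule continuous_on_IccI[OF _ _ _ t])
      have "(v \<longlongrightarrow> exp (-a * 0) * w 0) (at_right 0)"
        unfolding v_def using assms(1) by (intro tendsto_intros)
      then show "(v \<longlongrightarrow> v 0) (at_right 0)"
        by (simp add: v_def)
      show "(v \<longlongrightarrow> v t) (at_left t)"
        using DERIV_isCont[OF v_deriv[OF t]] by (simp add: isCont_def filterlim_at_split)
      show "v \<midarrow>s\<rightarrow> v s" if "0 < s" for s
        using DERIV_isCont[OF v_deriv[OF that]] by (simp add: isCont_def)
    qed
    then show ?thesis
      using v_deriv by (intro DERIV_isconst_end[OF t]) auto
  qed simp
  then have "exp (a * t) * v t = exp (a * t) * w 0"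
    by (simp add: v_def)
  then show ?thesis
    by (simp add: v_def mult.assoc[symmetric] exp_add[symmetric])
qed

lemma abs_le_Xnorm:
  assumes "bounded \<Omega>" "continuous_on (closure \<Omega>) f" "x \<in> closure \<Omega>"
  shows "\<bar>f x\<bar> \<le> Xnorm \<Omega> f"
proof -
  have "compact ((\<lambda>x. \<bar>f x\<bar>) ` closure \<Omega>)"
    using assms(1,2) by (intro compact_continuous_image continuous_intros) (simp_all add: compact_closure)
  then have "bdd_above ((\<lambda>x. \<bar>f x\<bar>) ` closure \<Omega>)"
    by (intro bounded_imp_bdd_above compact_imp_bounded)
  then show ?thesis
    unfolding Xnorm_def using assms(3) by (rule cSUP_upper2) simp
qed

lemma Xnorm_tendsto_zero_imp_tendsto:
  assumes "bounded \<Omega>" "x \<in> closure \<Omega>" "((\<lambda>h. Xnorm \<Omega> (f h)) \<longlongrightarrow> 0) F"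
    and "eventually (\<lambda>h. continuous_on (closure \<Omega>) (f h)) F"
  shows "((\<lambda>h. f h x) \<longlongrightarrow> 0) F"
proof -
  have "eventually (\<lambda>h. norm (f h x) \<le> Xnorm \<Omega> (f h)) F"
    using assms(4) by eventually_elim (use abs_le_Xnorm assms(1,2) in auto)
  then show ?thesis
    using assms(3) by (rule Lim_null_comparison)
qed

lemma W11_continuous_on:
  assumes "W11 \<Omega> \<phi>" "t \<ge> 0"
  shows "continuous_on (closure \<Omega>) (\<phi> t)"
  using assms unfolding W11_def in_X_def by blast

lemma W11_tendsto_initial:
  assumes "bounded \<Omega>" "W11 \<Omega> \<phi>" "x \<in> closure \<Omega>"
  shows "((\<lambda>t. \<phi> t x) \<longlongrightarrow> \<phi> 0 x) (at_right 0)"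
proof -
  have "((\<lambda>h. Xnorm \<Omega> (\<lambda>x. \<phi> h x - \<phi> 0 x)) \<longlongrightarrow> 0) (at_right 0)"
    using assms(2) unfolding W11_def by blast
  moreover have "eventually (\<lambda>h. continuous_on (closure \<Omega>) (\<lambda>x. \<phi> h x - \<phi> 0 x)) (at_right 0)"
    using eventually_at_right_less[of 0]
    by eventually_elim (use W11_continuous_on[OF assms(2)] in \<open>auto intro!: continuous_intros\<close>)
  ultimately have "((\<lambda>h. \<phi> h x - \<phi> 0 x) \<longlongrightarrow> 0) (at_right 0)"
    by (rule Xnorm_tendsto_zero_imp_tendsto[OF assms(1,3)])
  then show ?thesis
    by (simp add: LIM_zero_iff)
qed

lemma has_X_derivative_imp_has_real_derivative:
  assumes "bounded \<Omega>" "x \<in> closure \<Omega>" "a > 0" "has_X_derivative \<Omega> \<phi> \<psi> a"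
    and "\<And>t. t \<ge> 0 \<Longrightarrow> continuous_on (closure \<Omega>) (\<phi> t)" "continuous_on (closure \<Omega>) \<psi>"
  shows "((\<lambda>t. \<phi> t x) has_real_derivative \<psi> x) (at a)"
proof -
  have "at 0 within {-a..} = at (0::real)"
    using assms(3) by (intro at_within_interior) simp
  then have "((\<lambda>h. Xnorm \<Omega> (\<lambda>x. (\<phi> (a + h) x - \<phi> a x) / h - \<psi> x)) \<longlongrightarrow> 0) (at 0)"
    using assms(4) unfolding has_X_derivative_def by simp
  moreover have "eventually (\<lambda>h. h \<in> {-a<..} \<and> h \<noteq> 0) (at (0::real))"
    using assms(3) by (intro eventually_conj eventually_at_in_open' eventually_neq_at_within) auto
  then have "eventually (\<lambda>h. continuous_on (closure \<Omega>) (\<lambda>x. (\<phi> (a + h) x - \<phi> a x) / h - \<psi> x))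
      (at 0)"
    by eventually_elim (use assms(3,5,6) in \<open>auto intro!: continuous_intros\<close>)
  ultimately have "((\<lambda>h. (\<phi> (a + h) x - \<phi> a x) / h - \<psi> x) \<longlongrightarrow> 0) (at 0)"
    by (rule Xnorm_tendsto_zero_imp_tendsto[OF assms(1,2)])
  then show ?thesis
    by (simp add: DERIV_def LIM_zero_iff)
qed

lemma Kop_constant_kernel:
  assumes "continuous_on UNIV J" "\<forall>x\<in>\<Omega>. \<forall>y\<in>\<Omega>. J (x - y) = \<rho>" "x \<in> closure \<Omega>"
  shows "Kop J \<Omega> f x = \<rho> * integral \<Omega> f"
proof -
  have "J (x - y) = \<rho>" if "y \<in> \<Omega>" for y
  proof -
    have "closed {x. J (x - y) = \<rho>}"
      by (intro closed_Collect_eq continuous_intros continuous_on_compose2[OF assms(1)]) auto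
    moreover have "\<Omega> \<subseteq> {x. J (x - y) = \<rho>}"
      using assms(2) that by auto
    ultimately show ?thesis
      using closure_minimal assms(3) by blast
  qed
  then have "Kop J \<Omega> f x = integral \<Omega> (\<lambda>y. \<rho> * f y)"
    unfolding Kop_def by (intro integral_cong) auto
  then show ?thesis
    by simp
qed

lemma eigenvector_pointwise_ode:
  assumes "bounded \<Omega>" "continuous_on UNIV J" "\<forall>x\<in>\<Omega>. \<forall>y\<in>\<Omega>. J (x - y) = \<rho>"
    and "is_eigenvector J \<Omega> \<mu> \<beta> lam \<phi>" "x \<in> closure \<Omega>" "a > 0"
  shows "((\<lambda>t. \<phi> t x) has_real_derivative \<rho> * integral \<Omega> (\<phi> a) - (1 + \<mu> + lam) * \<phi> a x) (at a)"
proof -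
  let ?\<psi> = "\<lambda>x. Kop J \<Omega> (\<phi> a) x - \<phi> a x - \<mu> * \<phi> a x - lam * \<phi> a x"
  have W: "W11 \<Omega> \<phi>" and D: "has_X_derivative \<Omega> \<phi> ?\<psi> a"
    using assms(4,6) unfolding is_eigenvector_def by auto
  have K: "Kop J \<Omega> (\<phi> a) y = \<rho> * integral \<Omega> (\<phi> a)" if "y \<in> closure \<Omega>" for y
    using Kop_constant_kernel[OF assms(2,3) that] .
  have "continuous_on (closure \<Omega>) (\<lambda>x. \<rho> * integral \<Omega> (\<phi> a) - \<phi> a x - \<mu> * \<phi> a x - lam * \<phi> a x)"
    using W11_continuous_on[OF W] assms(6) by (intro continuous_intros) auto
  then have "continuous_on (closure \<Omega>) ?\<psi>"
    by (rule continuous_on_eq) (simp add: K)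
  then have "((\<lambda>t. \<phi> t x) has_real_derivative ?\<psi> x) (at a)"
    using W11_continuous_on[OF W]
    by (intro has_X_derivative_imp_has_real_derivative[OF assms(1,5,6) D]) auto
  then show ?thesis
    by (simp add: K[OF assms(5)] algebra_simps)
qed

lemma mean_field_ode_solution:
  fixes u :: "real \<Rightarrow> 'a::euclidean_space \<Rightarrow> real" and \<Omega> S :: "'a set" and \<rho> c :: real
  defines "m \<equiv> measure lebesgue \<Omega>"
  defines "B \<equiv> integral \<Omega> (u 0) / m"
  assumes \<Omega>: "\<Omega> \<in> lmeasurable" "m > 0" "\<Omega> \<subseteq> S" and u0_int: "u 0 integrable_on \<Omega>"
    and init: "\<And>x. x \<in> S \<Longrightarrow> ((\<lambda>t. u t x) \<longlongrightarrow> u 0 x) (at_right 0)"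
    and ode: "\<And>x s. x \<in> S \<Longrightarrow> s > 0 \<Longrightarrow>
      ((\<lambda>t. u t x) has_real_derivative \<rho> * integral \<Omega> (u s) - c * u s x) (at s)"
    and "x \<in> S" "t \<ge> 0"
  shows "u t x = B * exp ((\<rho> * m - c) * t) + (u 0 x - B) * exp (-c * t)"
proof -
  have "\<Omega> \<noteq> {}"
    using \<Omega>(2) by (auto simp: m_def)
  then obtain z where z: "z \<in> S"
    using \<Omega>(3) by blast
  define H where "H = integral \<Omega> (u 0)"
  define g where "g s = u s z - exp (-c * s) * u 0 z" for s
  have u_split: "u s y = g s + exp (-c * s) * u 0 y" if "y \<in> S" "s \<ge> 0" for y s
  proof -
    have "u s y - u s z = exp (-c * s) * (u 0 y - u 0 z)"
    proof (rule linear_ode_solution[where w = "\<lambda>s. u s y - u s z", OF _ _ that(2)])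
      show "((\<lambda>s. u s y - u s z) \<longlongrightarrow> u 0 y - u 0 z) (at_right 0)"
        using init that(1) z by (intro tendsto_intros)
      show "((\<lambda>s. u s y - u s z) has_real_derivative -c * (u s y - u s z)) (at s)" if "s > 0" for s
        using DERIV_diff[OF ode[OF \<open>y \<in> S\<close> that] ode[OF z that]] by (simp add: algebra_simps)
    qed
    then show ?thesis
      by (simp add: g_def algebra_simps)
  qed
  have integral_split: "integral \<Omega> (u s) = m * g s + exp (-c * s) * H" if "s \<ge> 0" for s
  proof -
    have "integral \<Omega> (u s) = integral \<Omega> (\<lambda>y. g s + exp (-c * s) * u 0 y)"
      using u_split \<Omega>(3) that by (intro integral_cong) auto
    also have "\<dots> = m * g s + exp (-c * s) * H"
      using integral_add[OF integrable_on_const[OF \<Omega>(1)] integrable_on_mult_right[OF u0_int]]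
      by (simp add: integral_const_lmeasurable[OF \<Omega>(1)] H_def m_def)
    finally show ?thesis .
  qed
  have g0: "g 0 = 0"
    by (simp add: g_def)
  \<comment> \<open>\<open>N\<close> agrees with the mass \<open>integral \<Omega> (u s)\<close> for \<open>s \<ge> 0\<close>, but is visibly differentiable.\<close>
  define N where "N s = m * g s + exp (-c * s) * H" for s
  have N_sol: "N s = exp ((\<rho> * m - c) * s) * N 0" if "s \<ge> 0" for s
  proof (rule linear_ode_solution[OF _ _ that])
    have "(g \<longlongrightarrow> u 0 z - exp (-c * 0) * u 0 z) (at_right 0)"
      unfolding g_def using init[OF z] by (intro tendsto_intros)
    then have "(g \<longlongrightarrow> g 0) (at_right 0)"
      by (simp add: g0)
    then show "(N \<longlongrightarrow> N 0) (at_right 0)"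
      unfolding N_def by (intro tendsto_intros)
    show "(N has_real_derivative (\<rho> * m - c) * N s) (at s)" if "s > 0" for s
    proof -
      have "(g has_real_derivative (\<rho> * integral \<Omega> (u s) - c * u s z) - exp (-c * s) * (-c) * u 0 z) (at s)"
        unfolding g_def using ode[OF z that] by (auto intro!: derivative_eq_intros)
      then have "(N has_real_derivative
          m * ((\<rho> * integral \<Omega> (u s) - c * u s z) - exp (-c * s) * (-c) * u 0 z)
          + exp (-c * s) * (-c) * H) (at s)"
        unfolding N_def by (auto intro!: derivative_eq_intros)
      then show ?thesis
        using integral_split[of s] u_split[OF z, of s] that by (simp add: N_def algebra_simps)
    qed
  qed
  have "g t = B * (exp ((\<rho> * m - c) * t) - exp (-c * t))"
    using N_sol[OF \<open>t \<ge> 0\<close>] \<Omega>(2) by (simp add: N_def g0 B_def H_def field_simps)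
  then show ?thesis
    using u_split[OF \<open>x \<in> S\<close> \<open>t \<ge> 0\<close>] by (simp add: algebra_simps)
qed

lemma exp_sum_eventually_ge_half:
  fixes A B c k :: real
  assumes "0 < B" "0 < k" "c \<le> k"
  shows "eventually (\<lambda>t. B / 2 \<le> B * exp ((k - c) * t) + A * exp (-c * t)) at_top"
proof -
  have "filterlim (\<lambda>t::real. -k * t) at_bot at_top"
    using assms(2) by (intro filterlim_tendsto_neg_mult_at_bot[OF tendsto_const _ filterlim_ident]) simp
  then have "((\<lambda>t. A * exp (-k * t)) \<longlongrightarrow> A * 0) at_top"
    by (intro tendsto_intros filterlim_compose[OF exp_at_bot])
  then have "eventually (\<lambda>t. - B / 2 < A * exp (-k * t)) at_top"
    using assms(1) by (intro order_tendstoD(1)) auto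
  then show ?thesis
    using eventually_ge_at_top[of 0]
  proof eventually_elim
    case (elim t)
    have "exp (-c * t) = exp ((k - c) * t) * exp (-k * t)"
      by (simp flip: exp_add add: algebra_simps)
    then have "B * exp ((k - c) * t) + A * exp (-c * t) = exp ((k - c) * t) * (B + A * exp (-k * t))"
      by (simp add: algebra_simps)
    moreover have "1 * (B / 2) \<le> exp ((k - c) * t) * (B + A * exp (-k * t))"
      using elim assms(1,3) by (intro mult_mono) auto
    ultimately show ?case
      by simp
  qed
qed

lemma renewal_condition_pointwise:
  fixes B k c h b :: real
  assumes "0 < B" "0 < k" "k < c" "0 \<le> h" "h = b * (B / (c - k) + (h - B) / c)"
  shows "b < c" and "1 / (c - b) = (c - k) / (B * k) * (B / (c - k) + (h - B) / c)"
proof -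
  define \<Phi> where "\<Phi> = B / (c - k) + (h - B) / c"
  define L where "L = B * k / (c - k)"
  have "0 < L"
    using assms(1-3) by (simp add: L_def)
  have c_\<Phi>: "c * \<Phi> = h + L"
    using assms(2,3) by (simp add: \<Phi>_def L_def field_simps)
  have "h = b * \<Phi>"
    using assms(5) by (simp add: \<Phi>_def)
  then have "(c - b) * \<Phi> = L"
    using c_\<Phi> by (simp add: left_diff_distrib)
  moreover have "0 < \<Phi>"
    using c_\<Phi> \<open>0 < L\<close> assms(2-4) by (metis add_nonneg_pos zero_less_mult_pos order.strict_trans)
  ultimately show "b < c"
    using \<open>0 < L\<close> by (metis diff_gt_0_iff_gt zero_less_mult_pos2)
  with \<open>(c - b) * \<Phi> = L\<close> \<open>0 < L\<close> show "1 / (c - b) = (c - k) / (B * k) * (B / (c - k) + (h - B) / c)"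
    using assms(1-3) by (simp add: \<Phi>_def[symmetric] L_def field_simps)
qed

locale constant_kernel_eigenvector =
  fixes \<Omega> :: "'a::euclidean_space set" and J :: "'a \<Rightarrow> real" and \<rho> \<mu> lam :: real
    and \<beta> :: "'a \<Rightarrow> real" and \<phi> :: "real \<Rightarrow> 'a \<Rightarrow> real"
  assumes open_domain: "open \<Omega>" and bounded_domain: "bounded \<Omega>" and nonempty_domain: "\<Omega> \<noteq> {}"
    and kernel_continuous: "continuous_on UNIV J"
    and kernel_constant: "\<forall>x\<in>\<Omega>. \<forall>y\<in>\<Omega>. J (x - y) = \<rho>" and kernel_pos: "0 < \<rho>"
    and eigenvector: "is_eigenvector J \<Omega> \<mu> \<beta> lam \<phi>"
begin

definition "c = 1 + \<mu> + lam"
definition "m = measure lebesgue \<Omega>"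
definition "k = \<rho> * m"
definition "B = integral \<Omega> (\<phi> 0) / m"

lemma domain_lmeasurable: "\<Omega> \<in> lmeasurable"
  using lmeasurable_open[OF bounded_domain open_domain] .

lemma m_pos: "0 < m"
  unfolding m_def using open_domain bounded_domain nonempty_domain by (rule measure_lebesgue_open_pos)

lemma k_pos: "0 < k"
  unfolding k_def using kernel_pos m_pos by simp

lemma W11: "W11 \<Omega> \<phi>"
  using eigenvector unfolding is_eigenvector_def by blast

lemma initial_integrable: "\<phi> 0 integrable_on \<Omega>"
  using bounded_domain domain_lmeasurable W11_continuous_on[OF W11]
  by (intro continuous_on_closure_integrable_on) auto

lemma explicit_form:
  assumes "x \<in> closure \<Omega>" "t \<ge> 0"
  shows "\<phi> t x = B * exp ((k - c) * t) + (\<phi> 0 x - B) * exp (-c * t)"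
proof -
  have "0 < measure lebesgue \<Omega>"
    using m_pos by (simp add: m_def)
  moreover have "((\<lambda>t. \<phi> t y) \<longlongrightarrow> \<phi> 0 y) (at_right 0)" if "y \<in> closure \<Omega>" for y
    using bounded_domain W11 that by (rule W11_tendsto_initial)
  moreover have "((\<lambda>t. \<phi> t y) has_real_derivative \<rho> * integral \<Omega> (\<phi> s) - c * \<phi> s y) (at s)"
    if "y \<in> closure \<Omega>" "0 < s" for y s
    unfolding c_def
    using bounded_domain kernel_continuous kernel_constant eigenvector that
    by (rule eigenvector_pointwise_ode)
  ultimately show ?thesis
    using mean_field_ode_solution[where u = \<phi> and S = "closure \<Omega>" and \<rho> = \<rho> and c = c,
        OF domain_lmeasurable _ closure_subset initial_integrable _ _ assms]
    by (simp add: B_def k_def m_def)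
qed

lemma B_pos:
  assumes "positive_fun \<Omega> \<phi>"
  shows "0 < B"
proof -
  have nonneg: "0 \<le> \<phi> t x" if "t \<ge> 0" "x \<in> closure \<Omega>" for t x
    using assms that unfolding positive_fun_def by blast
  obtain t0 x0 where t0: "t0 \<ge> 0" "x0 \<in> closure \<Omega>" "\<phi> t0 x0 \<noteq> 0"
    using assms unfolding positive_fun_def by blast
  have "0 \<le> integral \<Omega> (\<phi> 0)"
    using initial_integrable nonneg closure_subset by (intro integral_nonneg) auto
  then have "0 \<le> B"
    using m_pos by (simp add: B_def)
  show ?thesis
  proof (rule ccontr)
    assume "\<not> 0 < B"
    with \<open>0 \<le> B\<close> have "B = 0" by simp
    then have "\<phi> 0 x0 \<noteq> 0"
      using explicit_form[OF t0(2,1)] t0(3) by auto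
    then have "0 < \<phi> 0 x0"
      using nonneg[OF _ t0(2)] by (simp add: order.not_eq_order_implies_strict)
    moreover have "0 \<le> \<phi> 0 x" if "x \<in> \<Omega>" for x
      using nonneg closure_subset that by blast
    ultimately have "0 < integral \<Omega> (\<phi> 0)"
      using open_domain bounded_domain W11_continuous_on[OF W11] t0(2)
      by (intro integral_pos_continuous_on_closure) auto
    then show False
      using \<open>B = 0\<close> m_pos by (simp add: B_def)
  qed
qed

lemma k_less_c:
  assumes "positive_fun \<Omega> \<phi>"
  shows "k < c"
proof (rule ccontr)
  assume "\<not> k < c"
  obtain z where z: "z \<in> closure \<Omega>"
    using nonempty_domain closure_subset by blast
  have "c \<le> k"
    using \<open>\<not> k < c\<close> by simp
  have "eventually (\<lambda>t. B / 2 \<le> \<phi> t z) at_top"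
    using exp_sum_eventually_ge_half[OF B_pos[OF assms] k_pos \<open>c \<le> k\<close>, of "\<phi> 0 z - B"]
      eventually_ge_at_top[of 0]
    by eventually_elim (metis explicit_form[OF z])
  then obtain T where T: "\<And>t. t \<ge> T \<Longrightarrow> B / 2 \<le> \<phi> t z"
    unfolding eventually_at_top_linorder by blast
  have norm_ge: "\<phi> t z \<le> Xnorm \<Omega> (\<phi> t)" if "t \<ge> 0" for t
    using abs_le_Xnorm[OF bounded_domain W11_continuous_on[OF W11 that] z] by linarith
  have "(\<lambda>t. Xnorm \<Omega> (\<phi> t)) integrable_on {0..}"
    using W11 unfolding W11_def by blast
  moreover have "0 \<le> Xnorm \<Omega> (\<phi> t)" if "t \<ge> 0" for t
    using abs_le_Xnorm[OF bounded_domain W11_continuous_on[OF W11 that] z] by linarith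
  ultimately obtain t where "t \<ge> max T 0" "Xnorm \<Omega> (\<phi> t) < B / 2"
    using integrable_on_nonneg_exists_lt[of _ "B / 2" "max T 0"] B_pos[OF assms] by auto
  then show False
    using T[of t] norm_ge[of t] by simp
qed

lemma time_integral:
  assumes "k < c" "x \<in> closure \<Omega>"
  shows "integral {0..} (\<lambda>t. \<phi> t x) = B / (c - k) + (\<phi> 0 x - B) / c"
proof -
  have "0 < c"
    using k_pos assms(1) by simp
  have "((\<lambda>t. B * exp ((k - c) * t) + (\<phi> 0 x - B) * exp (-c * t)) has_integral
      B / (c - k) + (\<phi> 0 x - B) / c) {0..}"
    using has_integral_add[OF
        has_integral_mult_right[OF has_integral_exp_minus_to_infinity[of "c - k" 0], of B]
        has_integral_mult_right[OF has_integral_exp_minus_to_infinity[of c 0], of "\<phi> 0 x - B"]]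
      assms(1) \<open>0 < c\<close>
    by simp
  then have "((\<lambda>t. \<phi> t x) has_integral B / (c - k) + (\<phi> 0 x - B) / c) {0..}"
    by (rule has_integral_eq[rotated]) (metis atLeast_iff explicit_form[OF assms(2)])
  then show ?thesis
    by (rule integral_unique)
qed

lemma characteristic_equation:
  assumes "positive_fun \<Omega> \<phi>"
  shows "\<forall>x\<in>closure \<Omega>. \<beta> x < c" and "\<rho> * integral \<Omega> (\<lambda>x. 1 / (c - \<beta> x)) = 1"
proof -
  note B_pos = B_pos[OF assms] and k_less_c = k_less_c[OF assms]
  have "0 \<le> \<phi> 0 x" if "x \<in> closure \<Omega>" for x
    using assms that unfolding positive_fun_def by blast
  moreover have "\<phi> 0 x = \<beta> x * (B / (c - k) + (\<phi> 0 x - B) / c)" if "x \<in> closure \<Omega>" for x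
    using eigenvector that time_integral[OF k_less_c that] unfolding is_eigenvector_def by auto
  ultimately have pointwise: "\<beta> x < c"
    "1 / (c - \<beta> x) = (c - k) / (B * k) * ((B / (c - k) - B / c) + \<phi> 0 x / c)"
    if "x \<in> closure \<Omega>" for x
    using renewal_condition_pointwise[OF B_pos k_pos k_less_c, of "\<phi> 0 x" "\<beta> x"] that
    by (auto simp: diff_divide_distrib)
  then show "\<forall>x\<in>closure \<Omega>. \<beta> x < c"
    by blast
  have "integral \<Omega> (\<lambda>x. 1 / (c - \<beta> x))
      = integral \<Omega> (\<lambda>x. (c - k) / (B * k) * ((B / (c - k) - B / c) + \<phi> 0 x / c))"
    using pointwise(2) closure_subset by (intro integral_cong) auto
  also have "\<dots> = (c - k) / (B * k) * (m * (B / (c - k) - B / c) + B * m / c)"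
    using m_pos integral_add[OF integrable_on_const[OF domain_lmeasurable]
        integrable_on_divide[OF initial_integrable]]
    by (simp add: integral_const_lmeasurable[OF domain_lmeasurable] B_def m_def)
  also have "\<dots> = 1 / \<rho>"
    using B_pos k_pos k_less_c m_pos kernel_pos by (simp add: k_def field_simps)
  finally show "\<rho> * integral \<Omega> (\<lambda>x. 1 / (c - \<beta> x)) = 1"
    using kernel_pos by simp
qed

end

lemma continuous_on_compact_SUP_attained:
  fixes f :: "'a::topological_space \<Rightarrow> real"
  assumes "compact S" "S \<noteq> {}" "continuous_on S f"
  obtains x where "x \<in> S" "(SUP y\<in>S. f y) = f x" "\<forall>y\<in>S. f y \<le> f x"
proof -
  obtain x where x: "x \<in> S" "\<forall>y\<in>S. f y \<le> f x"
    using continuous_attains_sup[OF assms] by blast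
  then have "(SUP y\<in>S. f y) = f x"
    by (intro cSup_eq_maximum) auto
  with x that show ?thesis
    by blast
qed

lemma integral_inverse_gap_le_nn_integral:
  fixes \<beta> :: "'a::euclidean_space \<Rightarrow> real"
  assumes "\<forall>x\<in>\<Omega>. \<beta> x \<le> b" "b < c" "(\<lambda>x. 1 / (c - \<beta> x)) integrable_on \<Omega>"
  shows "ennreal (integral \<Omega> (\<lambda>x. 1 / (c - \<beta> x)))
    \<le> (\<integral>\<^sup>+x\<in>\<Omega>. inverse (ennreal (b - \<beta> x)) \<partial>lborel)"
proof -
  have "ennreal (integral \<Omega> (\<lambda>x. 1 / (c - \<beta> x)))
      = (\<integral>\<^sup>+x. ennreal (1 / (c - \<beta> x)) * indicator \<Omega> x \<partial>lborel)"
    using assms by (intro nn_integral_has_integral_lebesgue'[symmetric] integrable_integral) auto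
  also have "\<dots> \<le> (\<integral>\<^sup>+x\<in>\<Omega>. inverse (ennreal (b - \<beta> x)) \<partial>lborel)"
  proof (intro nn_integral_mono)
    fix x
    show "ennreal (1 / (c - \<beta> x)) * indicator \<Omega> x \<le> inverse (ennreal (b - \<beta> x)) * indicator \<Omega> x"
    proof (cases "x \<in> \<Omega> \<and> \<beta> x < b")
      case True
      then have "1 / (c - \<beta> x) \<le> inverse (b - \<beta> x)"
        using assms(2) by (simp add: divide_simps)
      then show ?thesis
        using True inverse_ennreal[of "b - \<beta> x"] by (simp add: ennreal_leI)
    next
      case False
      then show ?thesis
        using assms(1) by (cases "x \<in> \<Omega>") (auto simp: ennreal_eq_0_iff)
    qed
  qed
  finally show ?thesis .
qed

theorem mainTheorem13:
  fixes \<Omega> :: "'a::euclidean_space set" and J \<beta> :: "'a \<Rightarrow> real" and \<mu> \<rho> :: real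
  assumes "open \<Omega>" and "connected \<Omega>" and "bounded \<Omega>" and "\<Omega> \<noteq> {}"
    and "continuous_on UNIV J" and "\<forall>x. J x \<ge> 0" and "bounded {x. J x \<noteq> 0}"
    and "J 0 > 0" and "(J has_integral 1) UNIV"
    and "\<mu> > 0"
    and "continuous_on (closure \<Omega>) \<beta>" and "\<forall>x\<in>closure \<Omega>. \<beta> x \<ge> 0"
    and "\<rho> > 0" and "\<forall>x\<in>\<Omega>. \<forall>y\<in>\<Omega>. J (x - y) = \<rho>"
    and "ennreal \<rho> * (\<integral>\<^sup>+ x\<in>\<Omega>. inverse (ennreal ((SUP z\<in>closure \<Omega>. \<beta> z) - \<beta> x)) \<partial>lborel) < 1"
  shows "\<not> (\<exists>lam \<phi>. is_eigenvector J \<Omega> \<mu> \<beta> lam \<phi> \<and> positive_fun \<Omega> \<phi>)"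
proof
  assume "\<exists>lam \<phi>. is_eigenvector J \<Omega> \<mu> \<beta> lam \<phi> \<and> positive_fun \<Omega> \<phi>"
  then obtain lam \<phi> where eig: "is_eigenvector J \<Omega> \<mu> \<beta> lam \<phi>" and pos: "positive_fun \<Omega> \<phi>"
    by blast
  interpret constant_kernel_eigenvector \<Omega> J \<rho> \<mu> lam \<beta> \<phi>
    using assms eig by unfold_locales auto
  obtain x_max where x_max: "x_max \<in> closure \<Omega>" "(SUP z\<in>closure \<Omega>. \<beta> z) = \<beta> x_max"
    "\<forall>x\<in>closure \<Omega>. \<beta> x \<le> \<beta> x_max"
    using continuous_on_compact_SUP_attained[OF _ _ assms(11)] assms(3,4) compact_closure by blast
  note gap = characteristic_equation[OF pos]
  have "(\<lambda>x. 1 / (c - \<beta> x)) integrable_on \<Omega>"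
    using assms(3,11) gap(1) domain_lmeasurable
    by (intro continuous_on_closure_integrable_on continuous_intros) auto
  then have "ennreal (integral \<Omega> (\<lambda>x. 1 / (c - \<beta> x)))
      \<le> (\<integral>\<^sup>+x\<in>\<Omega>. inverse (ennreal ((SUP z\<in>closure \<Omega>. \<beta> z) - \<beta> x)) \<partial>lborel)"
    using x_max gap(1) closure_subset by (intro integral_inverse_gap_le_nn_integral) auto
  moreover have "ennreal \<rho> * ennreal (integral \<Omega> (\<lambda>x. 1 / (c - \<beta> x))) = 1"
  proof -
    have "0 \<le> integral \<Omega> (\<lambda>x. 1 / (c - \<beta> x))"
      using gap(2) assms(13) by (smt (verit) mult_pos_neg)
    then show ?thesis
      using gap(2) assms(13) by (simp flip: ennreal_mult)
  qed
  ultimately show False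
    using assms(15) mult_left_mono[of _ _ "ennreal \<rho>"] by (metis not_le zero_le)
qed

end
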